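(* Let $f(z)=z^3\prod_{n=1}^{\infty}(1+z/a_n)^{2p_n}$ be a transcendental entire function, where $(a_n)$ is a positive strictly increasing sequence and $p_n\in\mathbb N$. Let $g$ be the associated function defined below and let $r_0=10$, $r_{n}=g^{n}(10)$ for $n\ge1$. Suppose there exists a sequence of positive integers $(N_k)_{k\in\mathbb N}$ such that $$f^{N_1}\big((-r_2,0]\big)\subset(-r_{N_1},0]$$ and, for all $k\ge2$, $$f^{N_k}\big((-r_{N_1+\cdots+N_{k-1}+2k},0]\big)\subset(-r_{N_1+\cdots+N_k},0].$$ Then $A(f)\cap(-\infty,0]=\emptyset$.
   Context: The function $g:[0,\infty)\to[0,\infty)$ is defined by $g(r)=r^3$ for $0\le r<a_1$ and $g(r)=r^3\prod_{n:\,a_n\le r}(1+r/a_n)^{2p_n}$ for $r\ge a_1$; $g^n$ is its $n$th iterate. $f^n$ denotes the $n$th iterate of $f$, $M(r)=\max_{|z|=r}|f(z)|$ and $M^n$ its $n$th iterate. For $R>0$ with $M(r)>r$ for $r\ge R$, $A_R(f)=\{z:|f^n(z)|\ge M^n(R)\text{ for all }n\in\mathbb N\}$ and $A(f)=\bigcup_{n\in\mathbb N}f^{-n}(A_R(f))$ (independent of the choice of such $R$). *)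

theory Defs
  imports "HOL-Analysis.Analysis" "HOL-Computational_Algebra.Polynomial"
begin

text \<open>The sequences are indexed from 0: a 0 plays the role of a_1, etc.\<close>

definition gfun :: "(nat \<Rightarrow> real) \<Rightarrow> (nat \<Rightarrow> nat) \<Rightarrow> real \<Rightarrow> real" where
  "gfun a p r = (if r < a 0 then r ^ 3
     else r ^ 3 * (\<Prod>n\<in>{n. a n \<le> r}. (1 + r / a n) ^ (2 * p n)))"

definition rseq :: "(nat \<Rightarrow> real) \<Rightarrow> (nat \<Rightarrow> nat) \<Rightarrow> nat \<Rightarrow> real" where
  "rseq a p n = (gfun a p ^^ n) 10"

definition maxmod :: "(complex \<Rightarrow> complex) \<Rightarrow> real \<Rightarrow> real" where
  "maxmod f r = Sup {norm (f z) | z. norm z = r}"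

definition A_R :: "(complex \<Rightarrow> complex) \<Rightarrow> real \<Rightarrow> complex set" where
  "A_R f R = {z. \<forall>n\<ge>1. norm ((f ^^ n) z) \<ge> (maxmod f ^^ n) R}"

definition fast_escaping :: "(complex \<Rightarrow> complex) \<Rightarrow> real \<Rightarrow> complex set" where
  "fast_escaping f R = (\<Union>n\<in>{1..}. (f ^^ n) -` A_R f R)"

end

theory Submission
  imports Defs
begin

(* Let f(z) = z^3 \<Prod>(1 + z/a_n)^(2p_n) and g its comparison function on [0,\<infinity>).
   On the real axis f is a real multiple of a convergent real product, which gives the two
   key estimates: f maps the segment (-\<rho>,0] into (-g(\<rho>),0], and g(t) \<le> |f(t)| \<le> M(t)
   for t \<ge> 0.  Consequently the iterates M^n(R), which are unbounded when M(r) > r for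
   r \<ge> R, dominate the radii r_n = g^n(10) after a delay, so every point of the fast
   escaping set satisfies r_n \<le> |f^(n+T)(w)| for some delay T.  Conversely, for a
   nonpositive real starting point the hypothesis on the blocks N_k lets us choose, for
   any delay T, a block k so large that c = N_1 + ... + N_(k-1) + T free steps followed by
   N_k steps land in (-r_n,0] with n = N_1 + ... + N_k at time n + T.  Both estimates
   together exclude nonpositive reals from A(f).
   The file proves general facts on real infinite products and on the maximum modulus
   first, then the properties of f, g and r_n inside a locale, and the theorem last. *)

lemma prodinf_le_finite_prod:
  fixes c :: "nat \<Rightarrow> real"
  assumes "convergent_prod c" "finite E" "\<And>i. 0 \<le> c i" "\<And>i. i \<notin> E \<Longrightarrow> c i \<le> 1"
  shows "prodinf c \<le> (\<Prod>i\<in>E. c i)"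
proof -
  obtain K where K: "E \<subseteq> {..<K}" using assms(2) finite_nat_iff_bounded by blast
  show ?thesis
  proof (rule prodinf_le_const[OF assms(1)])
    fix n assume "n \<ge> K"
    hence sub: "E \<subseteq> {..<n}" using K by auto
    have "prod c {..<n} = (\<Prod>i\<in>{..<n} - E. c i) * (\<Prod>i\<in>E. c i)"
      using prod.subset_diff[OF sub] by simp
    also have "\<dots> \<le> 1 * (\<Prod>i\<in>E. c i)"
      using assms by (intro mult_right_mono prod_le_1 prod_nonneg) auto
    finally show "prod c {..<n} \<le> (\<Prod>i\<in>E. c i)" by simp
  qed
qed

lemma finite_prod_le_prodinf:
  fixes c :: "nat \<Rightarrow> real"
  assumes "convergent_prod c" "finite E" "\<And>i. 1 \<le> c i"
  shows "(\<Prod>i\<in>E. c i) \<le> prodinf c"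
proof -
  obtain K where K: "E \<subseteq> {..<K}" using assms(2) finite_nat_iff_bounded by blast
  have "(\<Prod>i\<in>E. c i) \<le> prod c {..<K}"
    using assms K by (intro prod_mono2) (auto intro: order.trans[OF zero_le_one])
  also have "\<dots> \<le> prodinf c"
    using assms by (intro prod_le_prodinf[OF convergent_prod_has_prod])
      (auto intro: order.trans[OF zero_le_one])
  finally show ?thesis .
qed

lemma prodinf_nonneg_real:
  fixes c :: "nat \<Rightarrow> real"
  assumes "convergent_prod c" "\<And>i. 0 \<le> c i"
  shows "0 \<le> prodinf c"
  using assms by (intro LIMSEQ_le_const[OF convergent_prod_LIMSEQ[OF assms(1)]])
    (auto intro!: prod_nonneg)

lemma maxmod_bdd_above:
  fixes f :: "complex \<Rightarrow> complex"
  assumes "continuous_on UNIV f"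
  shows "bdd_above {norm (f z) | z. norm z = r}"
proof -
  have "{norm (f z) | z. norm z = r} = (\<lambda>z. norm (f z)) ` sphere 0 r" by auto
  moreover have "compact ((\<lambda>z. norm (f z)) ` sphere (0::complex) r)"
    by (intro compact_continuous_image continuous_on_norm continuous_on_subset[OF assms]) auto
  ultimately show ?thesis by (simp add: bounded_imp_bdd_above compact_imp_bounded)
qed

lemma norm_le_maxmod:
  fixes f :: "complex \<Rightarrow> complex"
  assumes "continuous_on UNIV f"
  shows "norm (f z) \<le> maxmod f (norm z)"
  unfolding maxmod_def using maxmod_bdd_above[OF assms] by (intro cSup_upper) auto

lemma less_maxmod_witness:
  fixes f :: "complex \<Rightarrow> complex"
  assumes "continuous_on UNIV f" "0 \<le> r" "L < maxmod f r"
  obtains z where "norm z = r" "L < norm (f z)"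
proof -
  have "norm (f (complex_of_real r)) \<in> {norm (f z) | z. norm z = r}"
    using assms(2) by auto
  hence "{norm (f z) | z. norm z = r} \<noteq> {}" by blast
  hence "\<exists>v\<in>{norm (f z) | z. norm z = r}. L < v"
    using assms(3) unfolding maxmod_def by (simp add: less_cSup_iff maxmod_bdd_above[OF assms(1)])
  thus ?thesis using that by blast
qed

lemma maxmod_iter_increasing:
  fixes f :: "complex \<Rightarrow> complex"
  assumes "\<forall>r\<ge>R. maxmod f r > r"
  shows "R \<le> (maxmod f ^^ n) R" and "(maxmod f ^^ n) R < (maxmod f ^^ Suc n) R"
proof -
  show above: "R \<le> (maxmod f ^^ n) R" for n
  proof (induction n)
    case (Suc n)
    thus ?case using assms[rule_format, OF Suc.IH] by simp
  qed simp
  show "(maxmod f ^^ n) R < (maxmod f ^^ Suc n) R"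
    using assms above[of n] by simp
qed

text \<open>The iterates \<open>M^n(R)\<close> are unbounded: a finite limit \<open>L\<close> would satisfy \<open>M(L) > L\<close>, and by
  continuity of \<open>f\<close> points of modulus slightly below \<open>L\<close> would already be mapped beyond \<open>L\<close>.\<close>

lemma maxmod_iter_unbounded:
  fixes f :: "complex \<Rightarrow> complex"
  assumes cont: "continuous_on UNIV f" and R: "R > 0" and above: "\<forall>r\<ge>R. maxmod f r > r"
  shows "\<exists>d. B \<le> (maxmod f ^^ d) R"
proof (rule ccontr)
  define s where "s n = (maxmod f ^^ n) R" for n
  assume "\<not> ?thesis"
  hence bounded: "\<forall>n. s n \<le> B" by (auto simp: s_def not_le less_imp_le)
  have inc: "s n < s (Suc n)" "R \<le> s n" for n
    using maxmod_iter_increasing[OF above] by (auto simp: s_def)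
  hence "incseq s" by (intro incseq_SucI less_imp_le)
  then obtain L where L: "s \<longlonglongrightarrow> L" "\<And>n. s n \<le> L"
    using bounded by (auto elim!: incseq_convergent)
  have sL: "s n < L" for n using inc(1)[of n] L(2)[of "Suc n"] by simp
  have LR: "R \<le> L" using inc(2)[of 0] L(2)[of 0] by simp
  have "0 \<le> L" "L < maxmod f L" using above LR R by auto
  then obtain z0 where z0: "norm z0 = L" "L < norm (f z0)"
    by (rule less_maxmod_witness[OF cont])
  define z where "z n = complex_of_real (s n / L) * z0" for n
  have "z \<longlonglongrightarrow> complex_of_real (L / L) * z0"
    unfolding z_def using LR R
    by (intro tendsto_mult tendsto_of_real tendsto_divide L(1) tendsto_const) simp
  hence "z \<longlonglongrightarrow> z0" using LR R by simp
  hence "(\<lambda>n. norm (f (z n))) \<longlonglongrightarrow> norm (f z0)"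
    by (intro tendsto_norm continuous_on_tendsto_compose[OF cont]) auto
  hence "eventually (\<lambda>n. L < norm (f (z n))) sequentially"
    using z0(2) by (rule order_tendstoD(1))
  then obtain n where n: "L < norm (f (z n))"
    unfolding eventually_sequentially by blast
  have "norm (z n) = s n" using z0 inc(2)[of n] LR R by (simp add: z_def norm_mult norm_divide)
  hence "norm (f (z n)) \<le> s (Suc n)" using norm_le_maxmod[OF cont, of "z n"] by (simp add: s_def)
  thus False using n sL[of "Suc n"] by simp
qed

definition nonpos_segment :: "real \<Rightarrow> complex set" where
  "nonpos_segment \<rho> = complex_of_real ` {- \<rho> <.. 0}"

lemma nonpos_segment_mono: "\<rho> \<le> \<sigma> \<Longrightarrow> nonpos_segment \<rho> \<subseteq> nonpos_segment \<sigma>"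
  unfolding nonpos_segment_def by auto

lemma real_nonpos_in_segment: "x \<le> 0 \<Longrightarrow> - x < \<rho> \<Longrightarrow> complex_of_real x \<in> nonpos_segment \<rho>"
  unfolding nonpos_segment_def by auto

lemma norm_in_nonpos_segment: "z \<in> nonpos_segment \<rho> \<Longrightarrow> norm z < \<rho>"
  unfolding nonpos_segment_def by auto

locale even_zero_product =
  fixes a :: "nat \<Rightarrow> real" and p :: "nat \<Rightarrow> nat" and f :: "complex \<Rightarrow> complex"
  assumes a_pos: "\<And>n. a n > 0"
    and a_mono: "strict_mono a"
    and p_pos: "\<And>n. p n \<ge> 1"
    and conv: "\<And>z. convergent_prod (\<lambda>n. (1 + z / complex_of_real (a n)) ^ (2 * p n))"
    and f_def: "\<And>z. f z = z ^ 3 * (\<Prod>n. (1 + z / complex_of_real (a n)) ^ (2 * p n))"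
begin

definition factor :: "real \<Rightarrow> nat \<Rightarrow> real" where
  "factor x n = (1 + x / a n) ^ (2 * p n)"

abbreviation g :: "real \<Rightarrow> real" where "g \<equiv> gfun a p"

abbreviation radius :: "nat \<Rightarrow> real" where "radius \<equiv> rseq a p"

lemma factor_nonneg: "0 \<le> factor x n"
  by (simp add: factor_def zero_le_even_power)

lemma factor_ge_1: "0 \<le> x \<Longrightarrow> 1 \<le> factor x n"
  using a_pos[of n] by (simp add: factor_def)

lemma convergent_prod_factor: "convergent_prod (factor x)"
proof -
  have "convergent_prod (complex_of_real \<circ> factor x)"
    using conv[of "complex_of_real x"] by (simp add: factor_def o_def)
  thus ?thesis by (simp add: convergent_prod_of_real_iff)
qed

lemma f_real_axis: "f (complex_of_real x) = complex_of_real (x ^ 3 * prodinf (factor x))"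
proof -
  have "(\<lambda>n. complex_of_real (factor x n)) has_prod complex_of_real (prodinf (factor x))"
    using convergent_prod_factor by (simp add: convergent_prod_has_prod)
  hence "(\<Prod>n. (1 + complex_of_real x / complex_of_real (a n)) ^ (2 * p n))
           = complex_of_real (prodinf (factor x))"
    by (simp add: factor_def has_prod_unique[symmetric])
  thus ?thesis by (simp add: f_def)
qed

text \<open>Only finitely many zeros lie in any disc: the factors at \<open>z = 1\<close> tend to 1,
  which is impossible if every \<open>a n\<close> stays below a fixed bound.\<close>

lemma finite_small_zeros: "finite {n. a n \<le> t}"
proof -
  obtain n0 where n0: "a n0 > t"
  proof (rule ccontr)
    assume "\<not> thesis"
    hence bounded: "a n \<le> t" for n using that by (meson not_le)
    hence t: "t > 0" using a_pos[of 0] by (meson less_le_trans)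
    have "1 + 1 / t \<le> 1 + 1 / a n" for n
      using bounded[of n] a_pos[of n] by (simp add: frac_le)
    also have "1 + 1 / a n \<le> factor 1 n" for n
    proof -
      have "1 + 1 / a n = (1 + 1 / a n) ^ 1" by simp
      also have "\<dots> \<le> (1 + 1 / a n) ^ (2 * p n)"
        using a_pos[of n] p_pos[of n] by (intro power_increasing) auto
      finally show ?thesis by (simp add: factor_def)
    qed
    finally have "1 + 1 / t \<le> 1"
      by (intro LIMSEQ_le_const[OF convergent_prod_imp_LIMSEQ[OF convergent_prod_factor]]) auto
    thus False using t by simp
  qed
  have "{n. a n \<le> t} \<subseteq> {..<n0}"
    using n0 by (auto simp flip: strict_mono_less[OF a_mono])
  thus ?thesis by (rule finite_subset) simp
qed

lemma gfun_eq: "g t = t ^ 3 * (\<Prod>n\<in>{n. a n \<le> t}. factor t n)"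
proof (cases "t < a 0")
  case True
  have "a 0 \<le> a n" for n by (simp add: strict_mono_less_eq[OF a_mono])
  hence "{n. a n \<le> t} = {}" using True by (auto simp: not_le intro: less_le_trans)
  thus ?thesis using True by (simp add: gfun_def)
qed (simp add: gfun_def factor_def)


lemma factor_mono: "0 \<le> s \<Longrightarrow> s \<le> t \<Longrightarrow> factor s n \<le> factor t n"
  unfolding factor_def using a_pos[of n]
  by (intro power_mono add_left_mono divide_right_mono) auto

lemma zero_product_ge_1: "0 \<le> t \<Longrightarrow> 1 \<le> (\<Prod>n\<in>{n. a n \<le> t}. factor t n)"
  by (intro prod_ge_1 factor_ge_1)

lemma gfun_ge_cube: "0 \<le> t \<Longrightarrow> t ^ 3 \<le> g t"
  unfolding gfun_eq using zero_product_ge_1[of t] by (simp add: mult_le_cancel_left1)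

lemma gfun_strict_mono:
  assumes "0 \<le> s" "s < t"
  shows "g s < g t"
proof -
  have "(\<Prod>n\<in>{n. a n \<le> s}. factor s n) \<le> (\<Prod>n\<in>{n. a n \<le> s}. factor t n)"
    using assms by (intro prod_mono conjI factor_mono factor_nonneg) auto
  also have "\<dots> \<le> (\<Prod>n\<in>{n. a n \<le> t}. factor t n)"
    using assms factor_ge_1[of t]
    by (intro prod_mono2 finite_small_zeros) (auto intro: order.trans[OF zero_le_one])
  finally have products: "(\<Prod>n\<in>{n. a n \<le> s}. factor s n) \<le> (\<Prod>n\<in>{n. a n \<le> t}. factor t n)" .
  have "g s \<le> s ^ 3 * (\<Prod>n\<in>{n. a n \<le> t}. factor t n)"
    unfolding gfun_eq using assms products by (intro mult_left_mono) auto
  also have "\<dots> < t ^ 3 * (\<Prod>n\<in>{n. a n \<le> t}. factor t n)"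
    using assms zero_product_ge_1[of t] by (intro mult_strict_right_mono power_strict_mono) auto
  finally show ?thesis unfolding gfun_eq .
qed

lemma gfun_mono: "0 \<le> s \<Longrightarrow> s \<le> t \<Longrightarrow> g s \<le> g t"
  using gfun_strict_mono[of s t] by (cases "s = t") auto

text \<open>On the negative real axis \<open>f\<close> is real and nonpositive (odd power times a product of
  even powers), and bounded in modulus by \<open>g\<close>: factors with \<open>a n > |x|\<close> lie in \<open>[0,1]\<close>,
  the remaining ones are at most the corresponding factors at \<open>|x|\<close>.\<close>

lemma f_nonpos_axis:
  assumes x: "x \<le> 0"
  shows "\<exists>y. f (complex_of_real x) = complex_of_real y \<and> y \<le> 0 \<and> - y \<le> g (- x)"
proof -
  define E where "E = {n. a n \<le> - x}"
  have small: "factor x n \<le> 1" if "n \<notin> E" for n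
  proof -
    have "0 \<le> 1 + x / a n" "1 + x / a n \<le> 1"
      using that x a_pos[of n] by (auto simp: E_def field_simps)
    thus ?thesis unfolding factor_def by (intro power_le_one) auto
  qed
  have reflect: "factor x n \<le> factor (- x) n" for n
  proof -
    have "\<bar>1 + x / a n\<bar> \<le> 1 + (- x) / a n" using x a_pos[of n] by (auto simp: field_simps)
    hence "\<bar>1 + x / a n\<bar> ^ (2 * p n) \<le> (1 + (- x) / a n) ^ (2 * p n)"
      by (intro power_mono) auto
    thus ?thesis unfolding factor_def by (simp add: power_even_abs)
  qed
  have "prodinf (factor x) \<le> (\<Prod>n\<in>E. factor x n)"
    unfolding E_def by (intro prodinf_le_finite_prod convergent_prod_factor finite_small_zeros
        factor_nonneg small[unfolded E_def])
  also have "\<dots> \<le> (\<Prod>n\<in>E. factor (- x) n)"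
    by (intro prod_mono conjI factor_nonneg reflect)
  finally have upper: "prodinf (factor x) \<le> (\<Prod>n\<in>E. factor (- x) n)" .
  have nonneg: "0 \<le> prodinf (factor x)"
    by (intro prodinf_nonneg_real convergent_prod_factor factor_nonneg)
  show ?thesis
  proof (intro exI conjI)
    show "f (complex_of_real x) = complex_of_real (x ^ 3 * prodinf (factor x))"
      by (rule f_real_axis)
    show "x ^ 3 * prodinf (factor x) \<le> 0"
      using x nonneg by (simp add: mult_nonpos_nonneg power_odd_eq)
    have "- (x ^ 3 * prodinf (factor x)) = (- x) ^ 3 * prodinf (factor x)" by simp
    also have "\<dots> \<le> (- x) ^ 3 * (\<Prod>n\<in>E. factor (- x) n)"
      using x upper by (intro mult_left_mono) auto
    also have "\<dots> = g (- x)" by (simp add: gfun_eq E_def)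
    finally show "- (x ^ 3 * prodinf (factor x)) \<le> g (- x)" .
  qed
qed

text \<open>On the positive real axis all factors are at least 1, so \<open>g\<close> is a lower bound.\<close>

lemma gfun_le_norm_f:
  assumes t: "0 \<le> t"
  shows "g t \<le> norm (f (complex_of_real t))"
proof -
  have "g t \<le> t ^ 3 * prodinf (factor t)"
    unfolding gfun_eq using t by (intro mult_left_mono finite_prod_le_prodinf
        convergent_prod_factor finite_small_zeros factor_ge_1) auto
  also have "\<dots> = norm (f (complex_of_real t))"
    using t prodinf_nonneg_real[OF convergent_prod_factor factor_nonneg, of t]
    by (simp add: f_real_axis norm_mult norm_power)
  finally show ?thesis .
qed

text \<open>Since \<open>g(t) \<ge> t^3 > t + 1\<close> for \<open>t \<ge> 10\<close>, the radii \<open>r_n\<close> increase strictly and \<open>r_n \<ge> 10 + n\<close>.\<close>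

lemma gfun_gt_succ:
  assumes t: "10 \<le> t"
  shows "t + 1 < g t"
proof -
  have "t + 1 < 10 * t" using t by simp
  also have "\<dots> \<le> t * t" using t by (intro mult_right_mono) auto
  also have "\<dots> \<le> t * t * t" using t by (simp add: mult_le_cancel_left1)
  also have "\<dots> \<le> g t" using gfun_ge_cube[of t] t by (simp add: power3_eq_cube)
  finally show ?thesis .
qed

lemma radius_Suc: "radius (Suc n) = g (radius n)"
  by (simp add: rseq_def)

lemma radius_ge: "10 + real n \<le> radius n"
proof (induction n)
  case (Suc n)
  thus ?case using gfun_gt_succ[of "radius n"] by (simp add: radius_Suc)
qed (simp add: rseq_def)

lemma radius_strict_mono: "strict_mono radius"
proof (rule strict_monoI_Suc)
  fix n
  have "radius n + 1 < g (radius n)" using radius_ge[of n] by (intro gfun_gt_succ) simp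
  thus "radius n < radius (Suc n)" by (simp add: radius_Suc)
qed

lemma f_maps_nonpos_segment:
  assumes "0 \<le> \<rho>"
  shows "f ` nonpos_segment \<rho> \<subseteq> nonpos_segment (g \<rho>)"
proof
  fix w assume "w \<in> f ` nonpos_segment \<rho>"
  then obtain x where x: "x \<le> 0" "- x < \<rho>" "w = f (complex_of_real x)"
    by (auto simp: nonpos_segment_def)
  then obtain y where y: "w = complex_of_real y" "y \<le> 0" "- y \<le> g (- x)"
    using f_nonpos_axis by blast
  have "g (- x) < g \<rho>" using x by (intro gfun_strict_mono) auto
  thus "w \<in> nonpos_segment (g \<rho>)" using y real_nonpos_in_segment[of y] by auto
qed

lemma iterate_maps_nonpos_segment:
  "(f ^^ c) ` nonpos_segment (radius m) \<subseteq> nonpos_segment (radius (m + c))"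
proof (induction c)
  case (Suc c)
  have "(f ^^ Suc c) ` nonpos_segment (radius m) \<subseteq> f ` nonpos_segment (radius (m + c))"
    using Suc by (auto simp: image_comp[symmetric])
  also have "\<dots> \<subseteq> nonpos_segment (radius (m + Suc c))"
    using radius_ge[of "m + c"] f_maps_nonpos_segment[of "radius (m + c)"] by (simp add: radius_Suc)
  finally show ?case .
qed simp

text \<open>Since \<open>g \<le> M\<close> on \<open>[0,\<infinity>)\<close> and \<open>g\<close> is increasing, the iterates of \<open>M\<close> dominate the radii
  \<open>r_n\<close> as soon as they have passed \<open>r_0 = 10\<close>.\<close>

lemma radius_le_maxmod_iter:
  assumes cont: "continuous_on UNIV f" and d: "10 \<le> (maxmod f ^^ d) R"
  shows "radius n \<le> (maxmod f ^^ (n + d)) R"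
proof (induction n)
  case 0
  thus ?case using d by (simp add: rseq_def)
next
  case (Suc n)
  define s where "s = (maxmod f ^^ (n + d)) R"
  have s: "radius n \<le> s" "0 \<le> s" using Suc radius_ge[of n] by (auto simp: s_def)
  have "radius (Suc n) \<le> g s"
    unfolding radius_Suc using s radius_ge[of n] by (intro gfun_mono) auto
  also have "\<dots> \<le> norm (f (complex_of_real s))" using s(2) by (rule gfun_le_norm_f)
  also have "\<dots> \<le> maxmod f s" using norm_le_maxmod[OF cont, of "complex_of_real s"] s by simp
  finally show ?case by (simp add: s_def)
qed

lemma fast_escaping_lower_bound:
  assumes cont: "continuous_on UNIV f" and R: "R > 0" and above: "\<forall>r\<ge>R. maxmod f r > r"
    and w: "w \<in> fast_escaping f R"
  shows "\<exists>T. \<forall>n. radius n \<le> norm ((f ^^ (n + T)) w)"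
proof -
  obtain l where "(f ^^ l) w \<in> A_R f R" using w by (auto simp: fast_escaping_def)
  hence escape: "(maxmod f ^^ m) R \<le> norm ((f ^^ (m + l)) w)" if "m \<ge> 1" for m
    using that by (simp add: A_R_def funpow_add)
  obtain d where d: "10 \<le> (maxmod f ^^ d) R" using maxmod_iter_unbounded[OF cont R above] by blast
  have "radius n \<le> norm ((f ^^ (n + (d + l + 1))) w)" for n
  proof -
    have "radius n \<le> radius (Suc n)" using strict_mono_less_eq[OF radius_strict_mono] by simp
    also have "\<dots> \<le> (maxmod f ^^ (Suc n + d)) R" by (rule radius_le_maxmod_iter[OF cont d])
    also have "\<dots> \<le> norm ((f ^^ (Suc n + d + l)) w)" by (rule escape) simp
    finally show ?thesis by (simp add: ac_simps)
  qed
  thus ?thesis by blast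
qed

text \<open>The hypothesis of the theorem forces orbits on the negative axis to grow more slowly:
  after \<open>c\<close> free steps from \<open>(-r_m, 0]\<close>, one block of \<open>N_k\<close> steps (with \<open>k\<close> large) lands in
  \<open>(-r_n, 0]\<close> at time \<open>n + T\<close>, whatever the delay \<open>T\<close>.\<close>

lemma nonpos_orbit_lags:
  fixes N :: "nat \<Rightarrow> nat"
  assumes jumps: "\<And>k. k \<ge> 2 \<Longrightarrow> (f ^^ N k) ` nonpos_segment (radius ((\<Sum>j=1..k-1. N j) + 2 * k))
                    \<subseteq> nonpos_segment (radius (\<Sum>j=1..k. N j))"
    and x: "x \<le> 0"
  shows "\<exists>n. norm ((f ^^ (n + T)) (complex_of_real x)) < radius n"
proof -
  define S where "S k = (\<Sum>j=1..k. N j)" for k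
  define m where "m = nat \<lceil>- x\<rceil>"
  define k where "k = m + T + 2"
  define c where "c = S (k - 1) + T"
  have "- x < radius m" using radius_ge[of m] by (simp add: m_def) linarith
  hence "complex_of_real x \<in> nonpos_segment (radius m)" using real_nonpos_in_segment[OF x] by blast
  hence "(f ^^ c) (complex_of_real x) \<in> nonpos_segment (radius (m + c))"
    using iterate_maps_nonpos_segment by blast
  also have "\<dots> \<subseteq> nonpos_segment (radius (S (k - 1) + 2 * k))"
    by (intro nonpos_segment_mono) (simp add: strict_mono_less_eq[OF radius_strict_mono] c_def k_def)
  finally have "(f ^^ N k) ((f ^^ c) (complex_of_real x)) \<in> nonpos_segment (radius (S k))"
    using jumps[of k] by (auto simp: S_def k_def)
  moreover have "S k + T = N k + c"
    by (simp add: S_def c_def k_def)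
  ultimately have "norm ((f ^^ (S k + T)) (complex_of_real x)) < radius (S k)"
    by (simp add: funpow_add norm_in_nonpos_segment)
  thus ?thesis by blast
qed

end

theorem lemma3p1:
  fixes f :: "complex \<Rightarrow> complex" and a :: "nat \<Rightarrow> real" and p :: "nat \<Rightarrow> nat"
  assumes a_pos: "\<And>n. a n > 0"
    and a_mono: "strict_mono a"
    and p_pos: "\<And>n. p n \<ge> 1"
    and conv: "\<And>z. convergent_prod (\<lambda>n. (1 + z / complex_of_real (a n)) ^ (2 * p n))"
    and f_def: "\<And>z. f z = z ^ 3 * (\<Prod>n. (1 + z / complex_of_real (a n)) ^ (2 * p n))"
    and entire: "f holomorphic_on UNIV"
    and transc: "\<not> (\<exists>q :: complex poly. \<forall>z. f z = poly q z)"
    and N_pos: "\<And>k. k \<ge> 1 \<Longrightarrow> N k > (0::nat)"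
    and N1: "(f ^^ N 1) ` (complex_of_real ` {- rseq a p 2 <.. 0})
               \<subseteq> complex_of_real ` {- rseq a p (N 1) <.. 0}"
    and Nk: "\<And>k. k \<ge> 2 \<Longrightarrow>
          (f ^^ N k) ` (complex_of_real ` {- rseq a p ((\<Sum>j=1..k-1. N j) + 2 * k) <.. 0})
            \<subseteq> complex_of_real ` {- rseq a p (\<Sum>j=1..k. N j) <.. 0}"
  shows "\<forall>R>0. (\<forall>r\<ge>R. maxmod f r > r) \<longrightarrow>
           fast_escaping f R \<inter> complex_of_real ` {..0} = {}"
proof (intro allI impI equals0I)
  interpret even_zero_product a p f
    using a_pos a_mono p_pos conv f_def by unfold_locales auto
  fix R w
  assume R: "R > 0" and above: "\<forall>r\<ge>R. maxmod f r > r"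
    and w: "w \<in> fast_escaping f R \<inter> complex_of_real ` {..0}"
  have cont: "continuous_on UNIV f" using entire by (rule holomorphic_on_imp_continuous_on)
  obtain x where x: "w = complex_of_real x" "x \<le> 0" using w by auto
  obtain T where T: "\<And>n. rseq a p n \<le> norm ((f ^^ (n + T)) w)"
    using fast_escaping_lower_bound[OF cont R above] w by blast
  have jumps: "(f ^^ N k) ` nonpos_segment (rseq a p ((\<Sum>j=1..k-1. N j) + 2 * k))
                 \<subseteq> nonpos_segment (rseq a p (\<Sum>j=1..k. N j))" if "k \<ge> 2" for k
    using Nk[OF that] by (simp add: nonpos_segment_def)
  obtain n where "norm ((f ^^ (n + T)) w) < rseq a p n"
    using nonpos_orbit_lags[OF jumps x(2)] x(1) by blast
  thus False using T[of n] by simp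
qed

end
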